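(* Let $G$ be a countable even-by-quotient abelian group with $\dim_{\mathbb Q}(G\otimes\mathbb Q)<\infty$, and let $H$ be the subgroup generated by a maximal independent system of elements of infinite order of $G$. Then the exact sequence \[0\to H\overset{i}{\to}G\overset{\pi}{\to}G/H\to0\] is coarsely split.
   Context: A set of nonzero elements $\{x_j\}$ of an abelian group is independent if $\sum n_jx_j=0$ implies $n_jx_j=0$ for all $j$. A countable abelian group $G$ is even-by-quotient if, for $H$ the subgroup generated by a maximal independent system of elements of infinite order, every element of $G/H$ has order a power of $2$. A proper left invariant metric on a countable group is $d(g,h)=\|g^{-1}h\|$ for a proper norm ($\|g\|=0$ iff $g=1$, $\|g\|=\|g^{-1}\|$, subadditive, finite balls). An exact sequence $0\to K\overset{i}{\to}G\overset{\pi}{\to}Q\to0$ is coarsely split if there are proper left invariant metrics $d_K,d_G,d_Q$ and a coarse equivalence $f:(G,d_G)\to(K\oplus Q,d_K\oplus d_Q)$ ($\ell_1$ sum metric) such that $f\circ i$ is at bounded distance from $k\mapsto(k,0)$ and $\pi'\circ f$ is at bounded distance from $\pi$, $\pi'$ the projection onto $Q$. Coarse maps: for each $\delta$ there is $\epsilon$ with $d(x,y)\le\delta\Rightarrow d(f(x),f(y))\le\epsilon$; coarse equivalences: coarse maps with coarse inverses up to bounded distance. *)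

theory Defs
  imports Complex_Main "HOL-Library.Countable_Set"
begin

definition nsm :: "nat \<Rightarrow> 'a::ab_group_add \<Rightarrow> 'a" where
  "nsm n x = (\<Sum>i<n. x)"

definition zsm :: "int \<Rightarrow> 'a::ab_group_add \<Rightarrow> 'a" where
  "zsm k x = (if 0 \<le> k then nsm (nat k) x else - nsm (nat (- k)) x)"

definition gen :: "'a::ab_group_add set \<Rightarrow> 'a set" where
  "gen S = {(\<Sum>x\<in>F. zsm (c x) x) | F c. finite F \<and> F \<subseteq> S}"

definition infinite_order :: "'a::ab_group_add \<Rightarrow> bool" where
  "infinite_order x \<longleftrightarrow> (\<forall>k. zsm k x = 0 \<longrightarrow> k = 0)"

definition independent_sys :: "'a::ab_group_add set \<Rightarrow> bool" where
  "independent_sys S \<longleftrightarrow> 0 \<notin> S \<and>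
     (\<forall>F c. finite F \<and> F \<subseteq> S \<and> (\<Sum>x\<in>F. zsm (c x) x) = 0
        \<longrightarrow> (\<forall>x\<in>F. zsm (c x) x = 0))"

definition max_indep_inf_order :: "'a::ab_group_add set \<Rightarrow> bool" where
  "max_indep_inf_order S \<longleftrightarrow> independent_sys S \<and> (\<forall>x\<in>S. infinite_order x) \<and>
     (\<forall>T. independent_sys T \<and> (\<forall>x\<in>T. infinite_order x) \<and> S \<subseteq> T \<longrightarrow> T = S)"

text \<open>Even-by-quotient with respect to the maximal independent system S:
  every element of G/<S> has order a power of 2.\<close>
definition even_by_quotient :: "'a::ab_group_add set \<Rightarrow> bool" where
  "even_by_quotient S \<longleftrightarrow> (\<forall>g::'a. \<exists>k::nat. zsm (2 ^ k) g \<in> gen S)"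

text \<open>dim_Q (G \<otimes> Q) finite: G \<otimes> Q is spanned by finitely many x \<otimes> 1,
  i.e. some finite F such that every g has a nonzero multiple in <F>.\<close>
definition finite_Q_dim :: "'a::ab_group_add itself \<Rightarrow> bool" where
  "finite_Q_dim _ \<longleftrightarrow> (\<exists>F::'a set. finite F \<and> (\<forall>g::'a. \<exists>m. m \<noteq> 0 \<and> zsm m g \<in> gen F))"

definition coset :: "'a::ab_group_add set \<Rightarrow> 'a \<Rightarrow> 'a set" where
  "coset H g = (\<lambda>h. g + h) ` H"

definition quot :: "'a::ab_group_add set \<Rightarrow> 'a set set" where
  "quot H = range (coset H)"

definition qadd :: "'a::ab_group_add set \<Rightarrow> 'a set \<Rightarrow> 'a set" where
  "qadd A B = {a + b | a b. a \<in> A \<and> b \<in> B}"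

definition qneg :: "'a::ab_group_add set \<Rightarrow> 'a set" where
  "qneg A = uminus ` A"

definition proper_norm :: "'g set \<Rightarrow> ('g \<Rightarrow> 'g \<Rightarrow> 'g) \<Rightarrow> ('g \<Rightarrow> 'g) \<Rightarrow> 'g \<Rightarrow> ('g \<Rightarrow> real) \<Rightarrow> bool" where
  "proper_norm A p n z N \<longleftrightarrow>
     (\<forall>x\<in>A. N x = 0 \<longleftrightarrow> x = z) \<and>
     (\<forall>x\<in>A. N (n x) = N x) \<and>
     (\<forall>x\<in>A. \<forall>y\<in>A. N (p x y) \<le> N x + N y) \<and>
     (\<forall>r. finite {x\<in>A. N x \<le> r})"

definition norm_dist :: "('g \<Rightarrow> 'g \<Rightarrow> 'g) \<Rightarrow> ('g \<Rightarrow> 'g) \<Rightarrow> ('g \<Rightarrow> real) \<Rightarrow> 'g \<Rightarrow> 'g \<Rightarrow> real" where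
  "norm_dist p n N g h = N (p (n g) h)"

definition coarse_map :: "'x set \<Rightarrow> ('x \<Rightarrow> 'x \<Rightarrow> real) \<Rightarrow> 'y set \<Rightarrow> ('y \<Rightarrow> 'y \<Rightarrow> real) \<Rightarrow> ('x \<Rightarrow> 'y) \<Rightarrow> bool" where
  "coarse_map X dX Y dY f \<longleftrightarrow> f ` X \<subseteq> Y \<and>
     (\<forall>\<delta>. \<exists>\<epsilon>. \<forall>x\<in>X. \<forall>y\<in>X. dX x y \<le> \<delta> \<longrightarrow> dY (f x) (f y) \<le> \<epsilon>)"

definition coarse_equiv :: "'x set \<Rightarrow> ('x \<Rightarrow> 'x \<Rightarrow> real) \<Rightarrow> 'y set \<Rightarrow> ('y \<Rightarrow> 'y \<Rightarrow> real) \<Rightarrow> ('x \<Rightarrow> 'y) \<Rightarrow> bool" where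
  "coarse_equiv X dX Y dY f \<longleftrightarrow> coarse_map X dX Y dY f \<and>
     (\<exists>g. coarse_map Y dY X dX g \<and>
          (\<exists>C. \<forall>x\<in>X. dX (g (f x)) x \<le> C) \<and>
          (\<exists>C. \<forall>y\<in>Y. dY (f (g y)) y \<le> C))"

text \<open>The exact sequence 0 \<rightarrow> H \<rightarrow> G \<rightarrow> G/H \<rightarrow> 0 (inclusion, coset map) is
  coarsely split; G is the whole type 'a.\<close>
definition coarsely_split :: "'a::ab_group_add set \<Rightarrow> bool" where
  "coarsely_split H \<longleftrightarrow>
    (\<exists>NK NG NQ (f :: 'a \<Rightarrow> 'a \<times> 'a set).
       proper_norm H (+) uminus 0 NK \<and>
       proper_norm UNIV (+) uminus 0 NG \<and>
       proper_norm (quot H) qadd qneg H NQ \<and>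
       (let dK = norm_dist (+) uminus NK;
            dG = norm_dist (+) uminus NG;
            dQ = norm_dist qadd qneg NQ;
            dKQ = (\<lambda>(k, q) (k', q'). dK k k' + dQ q q')
        in coarse_equiv UNIV dG (H \<times> quot H) dKQ f \<and>
           (\<exists>C. \<forall>k\<in>H. dKQ (f k) (k, H) \<le> C) \<and>
           (\<exists>C. \<forall>g. dQ (snd (f g)) (coset H g) \<le> C)))"

end

theory Submission
  imports Defs
begin

text \<open>
  Every g has a positive multiple lying in H = gen S, and by independence an element of H has
  unique integer coordinates along S; hence g has well defined rational coordinates along S.
  Taking integer parts of these coordinates gives a retraction r of G onto H with
  r (g + h) = r g + h for h in H.  For a fixed d, each coordinate of r (g + d) - r g is
  \<lfloor>q\<rfloor> or \<lfloor>q\<rfloor> + 1, where q is the corresponding (finitely supported) coordinate of d, so this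
  difference takes only finitely many values.  Consequently g \<mapsto> (r g, g + H) is a bijection
  G \<rightarrow> H \<times> G/H which is coarse in both directions for a word norm of G with finite balls and
  the induced quotient norm.
\<close>

lemma nsm_0 [simp]: "nsm 0 x = 0"
  by (simp add: nsm_def)

lemma nsm_Suc: "nsm (Suc n) x = nsm n x + x"
  by (simp add: nsm_def)

lemma zsm_0 [simp]: "zsm 0 x = 0"
  by (simp add: zsm_def)

lemma zsm_add1: "zsm (a + 1) x = zsm a x + x"
proof (cases "a \<ge> 0")
  case True
  then have "nat (a + 1) = Suc (nat a)" by simp
  with True show ?thesis by (simp add: zsm_def nsm_Suc)
next
  case False
  then have "nat (- a) = Suc (nat (- (a + 1)))" by simp
  with False show ?thesis by (auto simp: zsm_def nsm_Suc)
qed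

lemma zsm_sub1: "zsm (a - 1) x = zsm a x - x"
  using zsm_add1[of "a - 1" x] by (simp add: algebra_simps)

lemma zsm_1 [simp]: "zsm 1 x = x"
  using zsm_add1[of 0 x] by simp

lemma zsm_add: "zsm (a + b) x = zsm a x + zsm b x"
proof (induction b rule: int_induct[where k = 0])
  case base
  show ?case by simp
next
  case (step1 i)
  have "zsm (a + (i + 1)) x = zsm (a + i) x + x"
    using zsm_add1[of "a + i" x] by (simp add: add.assoc)
  also have "\<dots> = zsm a x + zsm (i + 1) x"
    using step1(2) by (simp add: zsm_add1 add.assoc)
  finally show ?case .
next
  case (step2 i)
  have "zsm (a + (i - 1)) x = zsm (a + i) x - x"
    using zsm_sub1[of "a + i" x] by (simp add: add_diff_eq)
  also have "\<dots> = zsm a x + zsm (i - 1) x"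
    using step2(2) by (simp add: zsm_sub1 add_diff_eq)
  finally show ?case .
qed

lemma zsm_uminus_left: "zsm (- a) x = - zsm a x"
  using zsm_add[of a "- a" x] by (simp add: eq_neg_iff_add_eq_0 add.commute)

lemma zsm_diff_left: "zsm (a - b) x = zsm a x - zsm b x"
  using zsm_add[of a "- b" x] zsm_uminus_left[of b x] by simp

lemma zsm_add_right: "zsm a (x + y) = zsm a x + zsm a y"
proof (induction a rule: int_induct[where k = 0])
  case base
  show ?case by simp
next
  case (step1 i)
  have "zsm (i + 1) (x + y) = zsm i (x + y) + (x + y)" by (rule zsm_add1)
  also have "\<dots> = (zsm i x + x) + (zsm i y + y)" using step1(2) by (simp add: ac_simps)
  finally show ?case by (simp only: zsm_add1)
next
  case (step2 i)
  have "zsm (i - 1) (x + y) = zsm i (x + y) - (x + y)" by (rule zsm_sub1)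
  also have "\<dots> = (zsm i x - x) + (zsm i y - y)" using step2(2) by (simp add: algebra_simps)
  finally show ?case by (simp only: zsm_sub1)
qed

lemma zsm_0_right [simp]: "zsm a 0 = 0"
  using zsm_add_right[of a 0 0] by simp

lemma zsm_mult: "zsm (a * b) x = zsm a (zsm b x)"
proof (induction a rule: int_induct[where k = 0])
  case base
  show ?case by simp
next
  case (step1 i)
  then show ?case by (simp add: zsm_add1 zsm_add distrib_right)
next
  case (step2 i)
  then show ?case by (simp add: zsm_sub1 zsm_diff_left left_diff_distrib)
qed

lemma zsm_sum: "zsm a (sum f F) = (\<Sum>i\<in>F. zsm a (f i))"
  by (induction F rule: infinite_finite_induct) (auto simp: zsm_add_right)

section \<open>A proper norm on a countable abelian group\<close>

text \<open>
  The word norm with respect to an enumeration e of the group in which the letters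
  \<plusminus>e(i) have weight i + 1; only finitely many words have bounded cost, so balls are finite.
\<close>

definition enum_elem :: "nat \<Rightarrow> 'a::ab_group_add" where
  "enum_elem = from_nat_into UNIV"

definition letter_val :: "bool \<times> nat \<Rightarrow> 'a::ab_group_add" where
  "letter_val p = (if fst p then enum_elem (snd p) else - enum_elem (snd p))"

definition word_cost :: "(bool \<times> nat) list \<Rightarrow> nat" where
  "word_cost w = sum_list (map (\<lambda>p. snd p + 1) w)"

definition word_norm :: "'a::ab_group_add \<Rightarrow> nat" where
  "word_norm x = (LEAST n. \<exists>w. sum_list (map letter_val w) = x \<and> word_cost w = n)"

lemma word_norm_le_cost: "sum_list (map letter_val w) = x \<Longrightarrow> word_norm x \<le> word_cost w"
  unfolding word_norm_def by (rule Least_le) blast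

lemma word_norm_attained:
  assumes "countable (UNIV :: 'a::ab_group_add set)"
  shows "\<exists>w. sum_list (map letter_val w) = (x::'a) \<and> word_cost w = word_norm x"
proof -
  have "x \<in> range (enum_elem :: nat \<Rightarrow> 'a)"
    unfolding enum_elem_def using assms by simp
  then obtain i where "enum_elem i = x" by blast
  then have "sum_list (map letter_val [(True, i)]) = x" by (simp add: letter_val_def)
  then have "\<exists>n w. sum_list (map letter_val w) = x \<and> word_cost w = n" by blast
  then show ?thesis unfolding word_norm_def by (rule LeastI_ex)
qed

lemma word_norm_0 [simp]: "word_norm 0 = 0"
  using word_norm_le_cost[of "[]" 0] by (simp add: word_cost_def)

lemma word_norm_eq_0_iff:
  assumes "countable (UNIV :: 'a::ab_group_add set)"
  shows "word_norm (x::'a) = 0 \<longleftrightarrow> x = 0"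
proof
  assume "word_norm x = 0"
  moreover obtain w where "sum_list (map letter_val w) = x" "word_cost w = word_norm x"
    using word_norm_attained[OF assms] by blast
  ultimately show "x = 0" by (cases w) (auto simp: word_cost_def)
qed simp

lemma word_norm_add_le:
  assumes "countable (UNIV :: 'a::ab_group_add set)"
  shows "word_norm ((x::'a) + y) \<le> word_norm x + word_norm y"
proof -
  obtain v where v: "sum_list (map letter_val v) = x" "word_cost v = word_norm x"
    using word_norm_attained[OF assms] by blast
  obtain w where w: "sum_list (map letter_val w) = y" "word_cost w = word_norm y"
    using word_norm_attained[OF assms] by blast
  have "word_norm (x + y) \<le> word_cost (v @ w)"
    using v w by (intro word_norm_le_cost) simp
  with v w show ?thesis by (simp add: word_cost_def)
qed

lemma word_norm_uminus_le:
  assumes "countable (UNIV :: 'a::ab_group_add set)"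
  shows "word_norm (- (x::'a)) \<le> word_norm x"
proof -
  obtain w where w: "sum_list (map letter_val w) = x" "word_cost w = word_norm x"
    using word_norm_attained[OF assms] by blast
  define w' where "w' = map (\<lambda>p. (\<not> fst p, snd p)) w"
  have "sum_list (map letter_val w') = - x"
    unfolding w'_def w(1)[symmetric] by (induction w) (auto simp: letter_val_def)
  moreover have "word_cost w' = word_cost w"
    unfolding w'_def by (induction w) (auto simp: word_cost_def)
  ultimately show ?thesis using word_norm_le_cost w(2) by metis
qed

lemma word_norm_uminus:
  assumes "countable (UNIV :: 'a::ab_group_add set)"
  shows "word_norm (- (x::'a)) = word_norm x"
  using word_norm_uminus_le[OF assms, of x] word_norm_uminus_le[OF assms, of "- x"] by simp

lemma finite_word_norm_le:
  assumes "countable (UNIV :: 'a::ab_group_add set)"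
  shows "finite {x::'a. word_norm x \<le> r}"
proof -
  let ?W = "{w. set w \<subseteq> (UNIV :: bool set) \<times> {..r} \<and> length w \<le> r}"
  have "{x::'a. word_norm x \<le> r} \<subseteq> (\<lambda>w. sum_list (map letter_val w)) ` ?W"
  proof
    fix x :: 'a
    assume "x \<in> {x. word_norm x \<le> r}"
    moreover obtain w where w: "sum_list (map letter_val w) = x" "word_cost w = word_norm x"
      using word_norm_attained[OF assms] by blast
    moreover have "snd p + 1 \<le> word_cost w" if "p \<in> set w" for p
      using that by (induction w) (auto simp: word_cost_def)
    moreover have "length w \<le> word_cost w"
      by (induction w) (auto simp: word_cost_def)
    ultimately show "x \<in> (\<lambda>w. sum_list (map letter_val w)) ` ?W"
      by force
  qed
  moreover have "finite ?W"
    by (rule finite_lists_length_le) simp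
  ultimately show ?thesis
    by (meson finite_imageI finite_subset)
qed

lemma finite_real_word_norm_le:
  assumes "countable (UNIV :: 'a::ab_group_add set)"
  shows "finite {x::'a. real (word_norm x) \<le> r}"
proof -
  have "{x::'a. real (word_norm x) \<le> r} \<subseteq> {x. word_norm x \<le> nat \<lceil>r\<rceil>}"
    by (auto simp: le_nat_iff ceiling_le_iff le_ceiling_iff intro: order_trans)
  then show ?thesis
    using finite_word_norm_le[OF assms] finite_subset by blast
qed

lemma word_norm_bounded_on_finite: "finite W \<Longrightarrow> \<exists>C. \<forall>w\<in>W. real (word_norm w) \<le> C"
  using finite_nat_set_iff_bounded_le[of "word_norm ` W"] by (meson finite_imageI image_eqI of_nat_le_iff)

lemma proper_norm_word_norm:
  assumes "countable (UNIV :: 'a::ab_group_add set)"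
  shows "proper_norm (A::'a set) (+) uminus 0 (\<lambda>x. real (word_norm x))"
  unfolding proper_norm_def
proof (intro conjI ballI allI)
  fix r :: real
  show "finite {x \<in> A. real (word_norm x) \<le> r}"
    using finite_real_word_norm_le[OF assms] by (rule finite_subset[rotated]) blast
qed (use word_norm_eq_0_iff[OF assms] word_norm_uminus[OF assms] word_norm_add_le[OF assms]
     in \<open>auto simp flip: of_nat_add\<close>)

definition is_subgroup :: "'a::ab_group_add set \<Rightarrow> bool" where
  "is_subgroup H \<longleftrightarrow> 0 \<in> H \<and> (\<forall>x\<in>H. \<forall>y\<in>H. x + y \<in> H) \<and> (\<forall>x\<in>H. - x \<in> H)"

lemma subgroup_diff: "is_subgroup H \<Longrightarrow> x \<in> H \<Longrightarrow> y \<in> H \<Longrightarrow> x - y \<in> H"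
  unfolding is_subgroup_def diff_conv_add_uminus by blast

lemma mem_coset_iff: "x \<in> coset H g \<longleftrightarrow> x - g \<in> H"
  unfolding coset_def by (auto intro: image_eqI[where x = "x - g"])

lemma coset_0: "coset H 0 = H"
  unfolding coset_def by simp

lemma coset_self: "is_subgroup H \<Longrightarrow> g \<in> coset H g"
  unfolding mem_coset_iff is_subgroup_def by simp

lemma coset_eqI:
  assumes H: "is_subgroup H" and ab: "a - b \<in> H"
  shows "coset H a = coset H b"
proof (intro set_eqI)
  fix x
  have "x - b \<in> H" if "x - a \<in> H"
  proof -
    have "(x - a) + (a - b) \<in> H" using H that ab unfolding is_subgroup_def by blast
    then show ?thesis by simp
  qed
  moreover have "x - a \<in> H" if "x - b \<in> H"
    using subgroup_diff[OF H that ab] by simp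
  ultimately show "x \<in> coset H a \<longleftrightarrow> x \<in> coset H b"
    unfolding mem_coset_iff by blast
qed

lemma coset_of_mem: "is_subgroup H \<Longrightarrow> x \<in> coset H g \<Longrightarrow> coset H x = coset H g"
  by (simp add: coset_eqI mem_coset_iff)

lemma qadd_coset:
  assumes "is_subgroup H"
  shows "qadd (coset H a) (coset H b) = coset H (a + b)"
proof (intro set_eqI iffI)
  fix x
  assume "x \<in> qadd (coset H a) (coset H b)"
  then obtain u v where uv: "x = u + v" "u - a \<in> H" "v - b \<in> H"
    unfolding qadd_def mem_coset_iff by blast
  then have "(u - a) + (v - b) \<in> H" using assms unfolding is_subgroup_def by blast
  with uv(1) show "x \<in> coset H (a + b)" unfolding mem_coset_iff by (simp add: algebra_simps)
next
  fix x
  assume "x \<in> coset H (a + b)"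
  then have "x - b \<in> coset H a" unfolding mem_coset_iff by (simp add: algebra_simps)
  moreover have "b \<in> coset H b" using coset_self[OF assms] .
  moreover have "x = (x - b) + b" by simp
  ultimately show "x \<in> qadd (coset H a) (coset H b)"
    unfolding qadd_def by blast
qed

lemma qneg_coset:
  assumes "is_subgroup H"
  shows "qneg (coset H a) = coset H (- a)"
proof -
  have "- x \<in> coset H a \<longleftrightarrow> x \<in> coset H (- a)" for x
  proof -
    have "- x - a = - (x - (- a))" by simp
    then show ?thesis
      using assms unfolding mem_coset_iff is_subgroup_def by (metis minus_minus)
  qed
  then have "x \<in> uminus ` coset H a \<longleftrightarrow> x \<in> coset H (- a)" for x
    by (metis image_iff minus_minus)
  then show ?thesis
    unfolding qneg_def by blast
qed

definition coset_norm :: "'a::ab_group_add set \<Rightarrow> nat" where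
  "coset_norm A = (LEAST n. \<exists>x\<in>A. word_norm x = n)"

lemma coset_norm_le: "x \<in> A \<Longrightarrow> coset_norm A \<le> word_norm x"
  unfolding coset_norm_def by (rule Least_le) blast

lemma coset_norm_attained: "x \<in> A \<Longrightarrow> \<exists>y\<in>A. word_norm y = coset_norm A"
  unfolding coset_norm_def by (rule LeastI_ex) blast

lemma coset_norm_subgroup: "is_subgroup H \<Longrightarrow> coset_norm H = 0"
  using coset_norm_le[of 0 H] unfolding is_subgroup_def by simp

lemma coset_norm_uminus_le:
  assumes "countable (UNIV :: 'a::ab_group_add set)" "is_subgroup H"
  shows "coset_norm (coset H (- g)) \<le> coset_norm (coset H (g::'a))"
proof -
  obtain y where y: "y \<in> coset H g" "word_norm y = coset_norm (coset H g)"
    using coset_norm_attained[OF coset_self[OF assms(2)]] by blast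
  then have "- y \<in> coset H (- g)"
    using qneg_coset[OF assms(2)] unfolding qneg_def by blast
  then show ?thesis
    using coset_norm_le y(2) word_norm_uminus[OF assms(1)] by metis
qed

lemma proper_norm_coset_norm:
  assumes cnt: "countable (UNIV :: 'a::ab_group_add set)" and H: "is_subgroup (H::'a set)"
  shows "proper_norm (quot H) qadd qneg H (\<lambda>A. real (coset_norm A))"
  unfolding proper_norm_def
proof (intro conjI ballI allI)
  fix A
  assume "A \<in> quot H"
  then obtain g where A: "A = coset H g" unfolding quot_def by blast
  obtain y where y: "y \<in> A" "word_norm y = coset_norm A"
    using coset_norm_attained[OF coset_self[OF H, of g]] A by blast
  show "real (coset_norm A) = 0 \<longleftrightarrow> A = H"
  proof
    assume "real (coset_norm A) = 0"
    then have "y = 0" using y(2) word_norm_eq_0_iff[OF cnt] by simp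
    then show "A = H" using coset_of_mem[OF H] y(1) A coset_0[of H] by metis
  qed (simp add: coset_norm_subgroup[OF H])
  show "real (coset_norm (qneg A)) = real (coset_norm A)"
    using coset_norm_uminus_le[OF cnt H, of g] coset_norm_uminus_le[OF cnt H, of "- g"]
    unfolding A qneg_coset[OF H] by simp
next
  fix A B
  assume "A \<in> quot H" "B \<in> quot H"
  then obtain a b where A: "A = coset H a" and B: "B = coset H b" unfolding quot_def by blast
  obtain y where y: "y \<in> A" "word_norm y = coset_norm A"
    using coset_norm_attained[OF coset_self[OF H, of a]] A by blast
  obtain z where z: "z \<in> B" "word_norm z = coset_norm B"
    using coset_norm_attained[OF coset_self[OF H, of b]] B by blast
  have "y + z \<in> qadd A B" unfolding qadd_def using y z by blast
  then have "coset_norm (qadd A B) \<le> word_norm (y + z)" by (rule coset_norm_le)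
  also have "\<dots> \<le> coset_norm A + coset_norm B" using word_norm_add_le[OF cnt] y z by metis
  finally show "real (coset_norm (qadd A B)) \<le> real (coset_norm A) + real (coset_norm B)"
    by linarith
next
  fix r :: real
  have "{A \<in> quot H. real (coset_norm A) \<le> r} \<subseteq> coset H ` {x. real (word_norm x) \<le> r}"
  proof
    fix A
    assume "A \<in> {A \<in> quot H. real (coset_norm A) \<le> r}"
    then obtain g where A: "A = coset H g" "real (coset_norm A) \<le> r" unfolding quot_def by blast
    obtain y where y: "y \<in> A" "word_norm y = coset_norm A"
      using coset_norm_attained[OF coset_self[OF H, of g]] A by blast
    have "A = coset H y" using coset_of_mem[OF H] y(1) A(1) by simp
    with y(2) A(2) show "A \<in> coset H ` {x. real (word_norm x) \<le> r}" by simp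
  qed
  then show "finite {A \<in> quot H. real (coset_norm A) \<le> r}"
    using finite_real_word_norm_le[OF cnt] finite_subset by blast
qed

definition coeff_supp :: "('a \<Rightarrow> int) \<Rightarrow> 'a set" where
  "coeff_supp c = {x. c x \<noteq> 0}"

definition lin_comb :: "('a::ab_group_add \<Rightarrow> int) \<Rightarrow> 'a" where
  "lin_comb c = (\<Sum>x\<in>coeff_supp c. zsm (c x) x)"

definition coeffs_in :: "'a set \<Rightarrow> ('a \<Rightarrow> int) \<Rightarrow> bool" where
  "coeffs_in S c \<longleftrightarrow> finite (coeff_supp c) \<and> coeff_supp c \<subseteq> S"

lemma lin_comb_eq_sum:
  "finite F \<Longrightarrow> coeff_supp c \<subseteq> F \<Longrightarrow> (\<Sum>x\<in>F. zsm (c x) x) = lin_comb c"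
  unfolding lin_comb_def by (rule sum.mono_neutral_right) (auto simp: coeff_supp_def)

lemma lin_comb_add:
  assumes "finite (coeff_supp c)" "finite (coeff_supp d)"
  shows "lin_comb (\<lambda>x. c x + d x) = lin_comb c + lin_comb d"
proof -
  let ?F = "coeff_supp c \<union> coeff_supp d"
  have "coeff_supp (\<lambda>x. c x + d x) \<subseteq> ?F" by (auto simp: coeff_supp_def)
  moreover have "finite ?F" using assms by simp
  ultimately have "lin_comb (\<lambda>x. c x + d x) = (\<Sum>x\<in>?F. zsm (c x + d x) x)"
    by (simp add: lin_comb_eq_sum)
  also have "\<dots> = (\<Sum>x\<in>?F. zsm (c x) x) + (\<Sum>x\<in>?F. zsm (d x) x)"
    by (simp add: zsm_add sum.distrib)
  also have "\<dots> = lin_comb c + lin_comb d"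
    using assms by (simp add: lin_comb_eq_sum)
  finally show ?thesis .
qed

lemma lin_comb_smult:
  assumes "finite (coeff_supp c)"
  shows "lin_comb (\<lambda>x. m * c x) = zsm m (lin_comb c)"
proof -
  have "coeff_supp (\<lambda>x. m * c x) \<subseteq> coeff_supp c" by (auto simp: coeff_supp_def)
  then have "lin_comb (\<lambda>x. m * c x) = (\<Sum>x\<in>coeff_supp c. zsm (m * c x) x)"
    using lin_comb_eq_sum[OF assms] by metis
  also have "\<dots> = zsm m (lin_comb c)" by (simp add: lin_comb_def zsm_sum zsm_mult)
  finally show ?thesis .
qed

lemma lin_comb_uminus: "finite (coeff_supp c) \<Longrightarrow> lin_comb (\<lambda>x. - c x) = - lin_comb c"
  using lin_comb_smult[of c "- 1"] by (simp add: zsm_uminus_left)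

lemma lin_comb_diff:
  assumes "finite (coeff_supp c)" "finite (coeff_supp d)"
  shows "lin_comb (\<lambda>x. c x - d x) = lin_comb c - lin_comb d"
proof -
  have "finite (coeff_supp (\<lambda>x. - d x))" using assms(2) by (simp add: coeff_supp_def)
  then have "lin_comb (\<lambda>x. c x + - d x) = lin_comb c + lin_comb (\<lambda>x. - d x)"
    using lin_comb_add assms(1) by blast
  then show ?thesis using lin_comb_uminus[OF assms(2)] by simp
qed

lemma coeffs_in_subset: "coeffs_in S c \<Longrightarrow> coeff_supp d \<subseteq> coeff_supp c \<Longrightarrow> coeffs_in S d"
  unfolding coeffs_in_def by (meson finite_subset subset_trans)

lemma coeffs_in_add:
  assumes "coeffs_in S c" "coeffs_in S d"
  shows "coeffs_in S (\<lambda>x. c x + d x)"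
proof -
  have "coeff_supp (\<lambda>x. c x + d x) \<subseteq> coeff_supp c \<union> coeff_supp d"
    by (auto simp: coeff_supp_def)
  with assms show ?thesis
    unfolding coeffs_in_def by (meson finite_UnI finite_subset le_sup_iff subset_trans)
qed

lemma coeffs_in_diff:
  assumes "coeffs_in S c" "coeffs_in S d"
  shows "coeffs_in S (\<lambda>x. c x - d x)"
proof -
  have "coeff_supp (\<lambda>x. c x - d x) \<subseteq> coeff_supp c \<union> coeff_supp d"
    by (auto simp: coeff_supp_def)
  with assms show ?thesis
    unfolding coeffs_in_def by (meson finite_UnI finite_subset le_sup_iff subset_trans)
qed

lemma coeffs_in_smult: "coeffs_in S c \<Longrightarrow> coeffs_in S (\<lambda>x. m * c x)"
  by (erule coeffs_in_subset) (auto simp: coeff_supp_def)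

lemma mem_gen_iff: "h \<in> gen S \<longleftrightarrow> (\<exists>c. coeffs_in S c \<and> h = lin_comb c)"
proof
  assume "h \<in> gen S"
  then obtain F c where F: "h = (\<Sum>x\<in>F. zsm (c x) x)" "finite F" "F \<subseteq> S"
    unfolding gen_def by blast
  define c' where "c' x = (if x \<in> F then c x else 0)" for x
  have supp: "coeff_supp c' \<subseteq> F" by (auto simp: coeff_supp_def c'_def)
  have "h = (\<Sum>x\<in>F. zsm (c' x) x)" unfolding F(1) by (rule sum.cong) (auto simp: c'_def)
  also have "\<dots> = lin_comb c'" by (rule lin_comb_eq_sum[OF F(2) supp])
  finally show "\<exists>c. coeffs_in S c \<and> h = lin_comb c"
    using supp F(2,3) finite_subset unfolding coeffs_in_def by blast
next
  assume "\<exists>c. coeffs_in S c \<and> h = lin_comb c"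
  then show "h \<in> gen S" unfolding gen_def lin_comb_def coeffs_in_def by blast
qed

lemma is_subgroup_gen: "is_subgroup (gen S)"
  unfolding is_subgroup_def
proof (intro conjI ballI)
  show "0 \<in> gen S" unfolding mem_gen_iff
    by (rule exI[of _ "\<lambda>_. 0"]) (simp add: coeffs_in_def coeff_supp_def lin_comb_def)
next
  fix x y
  assume "x \<in> gen S" "y \<in> gen S"
  then obtain c d where "coeffs_in S c" "x = lin_comb c" "coeffs_in S d" "y = lin_comb d"
    unfolding mem_gen_iff by blast
  moreover have "x + y = lin_comb (\<lambda>s. c s + d s)"
    using calculation by (simp add: coeffs_in_def lin_comb_add)
  ultimately show "x + y \<in> gen S"
    unfolding mem_gen_iff using coeffs_in_add by blast
next
  fix x
  assume "x \<in> gen S"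
  then obtain c where "coeffs_in S c" "x = lin_comb c" unfolding mem_gen_iff by blast
  then show "- x \<in> gen S"
    unfolding mem_gen_iff using coeffs_in_smult[of S c "- 1"]
    by (auto simp: coeffs_in_def lin_comb_uminus)
qed

section \<open>Rational coordinates along a maximal independent system\<close>

locale rational_coordinates =
  fixes S :: "'a::ab_group_add set"
  assumes independent: "independent_sys S"
    and infinite_order: "\<forall>x\<in>S. infinite_order x"
    and torsion_quotient: "\<forall>g. \<exists>m::int. m > 0 \<and> zsm m g \<in> gen S"
begin

lemma lin_comb_eq_0:
  assumes "coeffs_in S c" "lin_comb c = 0"
  shows "c = (\<lambda>_. 0)"
proof -
  have "finite (coeff_supp c)" "coeff_supp c \<subseteq> S" using assms(1) by (auto simp: coeffs_in_def)
  moreover have "(\<Sum>x\<in>coeff_supp c. zsm (c x) x) = 0" using assms(2) by (simp add: lin_comb_def)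
  ultimately have "\<forall>x\<in>coeff_supp c. zsm (c x) x = 0"
    using independent unfolding independent_sys_def by blast
  then have "\<forall>x\<in>coeff_supp c. c x = 0"
    using infinite_order \<open>coeff_supp c \<subseteq> S\<close> unfolding infinite_order_def by blast
  then show ?thesis by (auto simp: coeff_supp_def)
qed

lemma lin_comb_inj:
  assumes "coeffs_in S c" "coeffs_in S d" "lin_comb c = lin_comb d"
  shows "c = d"
proof -
  have "lin_comb (\<lambda>x. c x - d x) = 0" using assms by (simp add: lin_comb_diff coeffs_in_def)
  then have "(\<lambda>x. c x - d x) = (\<lambda>_. 0)" using lin_comb_eq_0 coeffs_in_diff assms by blast
  then show ?thesis by (simp add: fun_eq_iff)
qed

lemma multiple_in_gen: "\<exists>m c. m > 0 \<and> coeffs_in S c \<and> zsm m g = lin_comb c"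
  using torsion_quotient unfolding mem_gen_iff by blast

definition denom :: "'a \<Rightarrow> int" where
  "denom g = (SOME m. m > 0 \<and> zsm m g \<in> gen S)"

definition coords :: "'a \<Rightarrow> 'a \<Rightarrow> int" where
  "coords h = (THE c. coeffs_in S c \<and> lin_comb c = h)"

definition rat_coord :: "'a \<Rightarrow> 'a \<Rightarrow> real" where
  "rat_coord g x = real_of_int (coords (zsm (denom g) g) x) / real_of_int (denom g)"

lemma denom: "denom g > 0" "zsm (denom g) g \<in> gen S"
proof -
  have "\<exists>m. m > 0 \<and> zsm m g \<in> gen S" using torsion_quotient by blast
  then have "denom g > 0 \<and> zsm (denom g) g \<in> gen S"
    unfolding denom_def by (rule someI_ex)
  then show "denom g > 0" "zsm (denom g) g \<in> gen S" by auto
qed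

lemma coords_lin_comb: "coeffs_in S c \<Longrightarrow> coords (lin_comb c) = c"
  unfolding coords_def by (rule the_equality) (auto intro: lin_comb_inj)

lemma rat_coord_eq:
  assumes m: "m > 0" and c: "coeffs_in S c" and mg: "zsm m g = lin_comb c"
  shows "rat_coord g = (\<lambda>x. real_of_int (c x) / real_of_int m)"
proof
  fix x
  obtain c0 where c0: "coeffs_in S c0" "zsm (denom g) g = lin_comb c0"
    using denom(2) unfolding mem_gen_iff by blast
  have "lin_comb (\<lambda>x. m * c0 x) = zsm m (lin_comb c0)"
    using c0 by (simp add: lin_comb_smult coeffs_in_def)
  also have "\<dots> = zsm (m * denom g) g"
    using c0 by (simp add: zsm_mult)
  also have "\<dots> = zsm (denom g) (zsm m g)"
    by (simp add: zsm_mult[symmetric] mult.commute)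
  also have "\<dots> = lin_comb (\<lambda>x. denom g * c x)"
    using c mg by (simp add: lin_comb_smult coeffs_in_def)
  finally have "(\<lambda>x. m * c0 x) = (\<lambda>x. denom g * c x)"
    using lin_comb_inj coeffs_in_smult c c0 by blast
  then have "real_of_int m * real_of_int (c0 x) = real_of_int (denom g) * real_of_int (c x)"
    by (metis of_int_mult)
  then show "rat_coord g x = real_of_int (c x) / real_of_int m"
    unfolding rat_coord_def c0(2) coords_lin_comb[OF c0(1)]
    using m denom(1)[of g] by (simp add: field_simps)
qed

lemma rat_coord_add: "rat_coord (x + y) = (\<lambda>i. rat_coord x i + rat_coord y i)"
proof -
  obtain m1 c1 where 1: "m1 > 0" "coeffs_in S c1" "zsm m1 x = lin_comb c1"
    using multiple_in_gen by blast
  obtain m2 c2 where 2: "m2 > 0" "coeffs_in S c2" "zsm m2 y = lin_comb c2"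
    using multiple_in_gen by blast
  let ?c = "\<lambda>i. m2 * c1 i + m1 * c2 i"
  have "zsm (m1 * m2) (x + y) = zsm m2 (zsm m1 x) + zsm m1 (zsm m2 y)"
    by (simp add: zsm_add_right zsm_mult[symmetric] mult.commute)
  also have "\<dots> = lin_comb ?c"
    using 1 2 by (simp add: lin_comb_smult lin_comb_add coeffs_in_def coeff_supp_def)
  finally have "rat_coord (x + y) = (\<lambda>i. real_of_int (?c i) / real_of_int (m1 * m2))"
    using 1 2 by (intro rat_coord_eq coeffs_in_add coeffs_in_smult) simp_all
  then show ?thesis
    using rat_coord_eq[OF 1] rat_coord_eq[OF 2] 1(1) 2(1) by (auto simp: field_simps)
qed

lemma rat_coord_lin_comb: "coeffs_in S d \<Longrightarrow> rat_coord (lin_comb d) = (\<lambda>i. real_of_int (d i))"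
  using rat_coord_eq[of 1 d "lin_comb d"] by simp

lemma finite_rat_coord_supp: "finite {i. rat_coord g i \<noteq> 0}"
  and coeffs_in_floor_rat_coord: "coeffs_in S (\<lambda>i. \<lfloor>rat_coord g i\<rfloor>)"
proof -
  obtain m c where 1: "m > 0" "coeffs_in S c" "zsm m g = lin_comb c"
    using multiple_in_gen by blast
  then have "{i. rat_coord g i \<noteq> 0} \<subseteq> coeff_supp c"
    and "coeff_supp (\<lambda>i. \<lfloor>rat_coord g i\<rfloor>) \<subseteq> coeff_supp c"
    using rat_coord_eq[OF 1] by (auto simp: coeff_supp_def)
  with 1(2) show "finite {i. rat_coord g i \<noteq> 0}" "coeffs_in S (\<lambda>i. \<lfloor>rat_coord g i\<rfloor>)"
    unfolding coeffs_in_def by (auto intro: finite_subset)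
qed

definition int_part :: "'a \<Rightarrow> 'a" where
  "int_part g = lin_comb (\<lambda>i. \<lfloor>rat_coord g i\<rfloor>)"

lemma int_part_in_gen: "int_part g \<in> gen S"
  unfolding int_part_def mem_gen_iff using coeffs_in_floor_rat_coord by blast

lemma int_part_add_gen:
  assumes "h \<in> gen S"
  shows "int_part (g + h) = int_part g + h"
proof -
  obtain d where d: "coeffs_in S d" "h = lin_comb d" using assms unfolding mem_gen_iff by blast
  have "(\<lambda>i. \<lfloor>rat_coord (g + h) i\<rfloor>) = (\<lambda>i. \<lfloor>rat_coord g i\<rfloor> + d i)"
    unfolding rat_coord_add d(2) rat_coord_lin_comb[OF d(1)]
    by (simp only: floor_add_int[symmetric])
  then show ?thesis
    unfolding int_part_def d(2) using coeffs_in_floor_rat_coord d(1)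
    by (simp only:) (intro lin_comb_add; simp add: coeffs_in_def)
qed

lemma finite_range_int_part_diff: "finite (range (\<lambda>x. int_part (x + d) - int_part x))"
proof -
  let ?b = "rat_coord d"
  let ?F = "{i. ?b i \<noteq> 0}"
  let ?B = "(\<lambda>i. \<lfloor>?b i\<rfloor>) ` ?F \<union> (\<lambda>i. \<lfloor>?b i\<rfloor> + 1) ` ?F"
  let ?D = "{c. \<forall>i. (i \<in> ?F \<longrightarrow> c i \<in> ?B) \<and> (i \<notin> ?F \<longrightarrow> c i = 0)}"
  have "int_part (x + d) - int_part x \<in> lin_comb ` ?D" for x
  proof
    let ?c = "\<lambda>i. \<lfloor>rat_coord x i + ?b i\<rfloor> - \<lfloor>rat_coord x i\<rfloor>"
    have "int_part (x + d) - int_part x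
        = lin_comb (\<lambda>i. \<lfloor>rat_coord (x + d) i\<rfloor> - \<lfloor>rat_coord x i\<rfloor>)"
      unfolding int_part_def using coeffs_in_floor_rat_coord
      by (intro lin_comb_diff[symmetric]) (auto simp: coeffs_in_def)
    then show "int_part (x + d) - int_part x = lin_comb ?c"
      by (simp add: rat_coord_add)
    show "?c \<in> ?D"
    proof (intro CollectI allI conjI impI)
      fix i
      assume "i \<in> ?F"
      moreover have "?c i = \<lfloor>?b i\<rfloor> \<or> ?c i = \<lfloor>?b i\<rfloor> + 1"
        using floor_add[of "rat_coord x i" "?b i"] by (simp split: if_splits)
      ultimately show "?c i \<in> ?B" by blast
    qed simp
  qed
  then have "range (\<lambda>x. int_part (x + d) - int_part x) \<subseteq> lin_comb ` ?D" by blast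
  moreover have "finite ?D"
    using finite_rat_coord_supp by (intro finite_set_of_finite_funs) auto
  ultimately show ?thesis
    using finite_subset by blast
qed

end

section \<open>Coarse splitting from an equivariant retraction\<close>

locale equivariant_retraction =
  fixes H :: "'a::ab_group_add set" and r :: "'a \<Rightarrow> 'a"
  assumes countable_UNIV: "countable (UNIV :: 'a set)"
    and subgroup: "is_subgroup H"
    and retraction_in: "r g \<in> H"
    and retraction_add: "h \<in> H \<Longrightarrow> r (g + h) = r g + h"
    and finite_retraction_jumps: "finite (range (\<lambda>x. r (x + d) - r x))"
begin

definition dist_G :: "'a \<Rightarrow> 'a \<Rightarrow> real" where
  "dist_G = norm_dist (+) uminus (\<lambda>x. real (word_norm x))"

definition dist_Q :: "'a set \<Rightarrow> 'a set \<Rightarrow> real" where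
  "dist_Q = norm_dist qadd qneg (\<lambda>A. real (coset_norm A))"

definition dist_HQ :: "'a \<times> 'a set \<Rightarrow> 'a \<times> 'a set \<Rightarrow> real" where
  "dist_HQ = (\<lambda>(k, q) (k', q'). dist_G k k' + dist_Q q q')"

definition split_map :: "'a \<Rightarrow> 'a \<times> 'a set" where
  "split_map g = (r g, coset H g)"

lemma dist_G_eq: "dist_G a b = real (word_norm (- a + b))"
  unfolding dist_G_def norm_dist_def ..

lemma dist_Q_coset: "dist_Q (coset H a) (coset H b) = real (coset_norm (coset H (- a + b)))"
  unfolding dist_Q_def norm_dist_def qneg_coset[OF subgroup] qadd_coset[OF subgroup] ..

lemma dist_HQ_eq [simp]: "dist_HQ (k, q) (k', q') = dist_G k k' + dist_Q q q'"
  unfolding dist_HQ_def by simp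

lemma dist_Q_coset_self [simp]: "dist_Q (coset H a) (coset H a) = 0"
  using dist_Q_coset[of a a] coset_norm_subgroup[OF subgroup] by (simp add: coset_0)

lemma coset_norm_coset_le: "coset_norm (coset H t) \<le> word_norm t"
  using coset_norm_le[OF coset_self[OF subgroup]] .

lemma split_map_in: "split_map g \<in> H \<times> quot H"
  unfolding split_map_def quot_def using retraction_in by blast

lemma inj_split_map: "inj split_map"
proof (rule injI)
  fix x y
  assume "split_map x = split_map y"
  then have r: "r x = r y" and c: "coset H x = coset H y" unfolding split_map_def by auto
  have "y \<in> coset H x" using c coset_self[OF subgroup, of y] by simp
  then have "y - x \<in> H" by (simp add: mem_coset_iff)
  then have "r (x + (y - x)) = r x + (y - x)" by (rule retraction_add)
  with r show "x = y" by simp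
qed

lemma split_map_onto:
  assumes "p \<in> H \<times> quot H"
  shows "p \<in> range split_map"
proof -
  obtain k g where p: "p = (k, coset H g)" "k \<in> H" using assms unfolding quot_def by blast
  have h: "k - r g \<in> H" using subgroup_diff[OF subgroup p(2) retraction_in] .
  moreover have "coset H (g + (k - r g)) = coset H g"
    using coset_eqI[OF subgroup] h by simp
  ultimately have "split_map (g + (k - r g)) = p"
    unfolding split_map_def p by (simp add: retraction_add)
  then show ?thesis by blast
qed

lemma split_map_inv [simp]: "p \<in> H \<times> quot H \<Longrightarrow> split_map (inv split_map p) = p"
  by (simp add: f_inv_into_f split_map_onto)

text \<open>
  Moving by d changes the H-component of the splitting map by one of the finitely many
  jumps r (x + d) - r x.
\<close>

lemma coarse_map_split_map: "coarse_map UNIV dist_G (H \<times> quot H) dist_HQ split_map"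
  unfolding coarse_map_def
proof (intro conjI allI)
  show "split_map ` UNIV \<subseteq> H \<times> quot H" using split_map_in by blast
  fix \<delta>
  let ?B = "{v. real (word_norm v) \<le> \<delta>}"
  let ?W = "\<Union>d\<in>?B. range (\<lambda>x. r (x + d) - r x)"
  have "finite ?W" using finite_real_word_norm_le[OF countable_UNIV] finite_retraction_jumps by blast
  then obtain C where C: "\<forall>w\<in>?W. real (word_norm w) \<le> C"
    using word_norm_bounded_on_finite by blast
  show "\<exists>\<epsilon>. \<forall>x\<in>UNIV. \<forall>y\<in>UNIV. dist_G x y \<le> \<delta> \<longrightarrow> dist_HQ (split_map x) (split_map y) \<le> \<epsilon>"
  proof (intro exI[of _ "C + \<delta>"] ballI impI)
    fix x y
    assume "dist_G x y \<le> \<delta>"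
    then have d: "- x + y \<in> ?B" by (simp add: dist_G_eq)
    have "- r x + r y = r (x + (- x + y)) - r x" by simp
    then have "real (word_norm (- r x + r y)) \<le> C"
      using C d by (metis (no_types, lifting) UN_I rangeI)
    moreover have "real (coset_norm (coset H (- x + y))) \<le> \<delta>"
      using coset_norm_coset_le[of "- x + y"] d by simp
    ultimately show "dist_HQ (split_map x) (split_map y) \<le> C + \<delta>"
      unfolding split_map_def by (simp add: dist_G_eq dist_Q_coset)
  qed
qed

text \<open>
  Conversely, if the images of x and y are close, then -x + y differs from a short element z
  of its coset by a jump r (x + z) - r x, up to the short element - r x + r y.
\<close>

lemma coarse_map_inv_split_map: "coarse_map (H \<times> quot H) dist_HQ UNIV dist_G (inv split_map)"
  unfolding coarse_map_def
proof (intro conjI allI)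
  fix \<delta>
  let ?B = "{v. real (word_norm v) \<le> \<delta>}"
  let ?W = "\<Union>z\<in>?B. \<Union>a\<in>?B. (\<lambda>e. z - e + a) ` range (\<lambda>x. r (x + z) - r x)"
  have "finite ?W" using finite_real_word_norm_le[OF countable_UNIV] finite_retraction_jumps by blast
  then obtain C where C: "\<forall>w\<in>?W. real (word_norm w) \<le> C"
    using word_norm_bounded_on_finite by blast
  show "\<exists>\<epsilon>. \<forall>p\<in>H \<times> quot H. \<forall>p'\<in>H \<times> quot H.
      dist_HQ p p' \<le> \<delta> \<longrightarrow> dist_G (inv split_map p) (inv split_map p') \<le> \<epsilon>"
  proof (intro exI[of _ C] ballI impI)
    fix p p'
    assume p: "p \<in> H \<times> quot H" "p' \<in> H \<times> quot H" and close: "dist_HQ p p' \<le> \<delta>"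
    define x where "x = inv split_map p"
    define y where "y = inv split_map p'"
    have "p = split_map x" "p' = split_map y" using p by (simp_all add: x_def y_def)
    then have "dist_HQ p p' = real (word_norm (- r x + r y)) + real (coset_norm (coset H (- x + y)))"
      by (simp add: split_map_def dist_G_eq dist_Q_coset)
    then have a: "- r x + r y \<in> ?B" and b: "real (coset_norm (coset H (- x + y))) \<le> \<delta>"
      using close by auto
    obtain z where z: "z \<in> coset H (- x + y)" "word_norm z = coset_norm (coset H (- x + y))"
      using coset_norm_attained[OF coset_self[OF subgroup]] by blast
    with b have zB: "z \<in> ?B" by simp
    define h where "h = z - (- x + y)"
    have "h \<in> H" using z(1) unfolding h_def mem_coset_iff .
    moreover have "x + z = y + h" unfolding h_def by (simp add: algebra_simps)
    ultimately have "r (x + z) = r y + h" by (simp add: retraction_add)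
    then have "- x + y = z - (r (x + z) - r x) + (- r x + r y)"
      unfolding h_def by (simp add: algebra_simps)
    moreover have "z - (r (x + z) - r x) + (- r x + r y) \<in> ?W"
      using zB a by blast
    then have "real (word_norm (z - (r (x + z) - r x) + (- r x + r y))) \<le> C"
      using C by blast
    ultimately show "dist_G (inv split_map p) (inv split_map p') \<le> C"
      unfolding x_def[symmetric] y_def[symmetric] dist_G_eq by simp
  qed
qed simp

lemma coarse_equiv_split_map: "coarse_equiv UNIV dist_G (H \<times> quot H) dist_HQ split_map"
  unfolding coarse_equiv_def
proof (intro conjI exI[of _ "inv split_map"])
  show "\<exists>C. \<forall>x\<in>UNIV. dist_G (inv split_map (split_map x)) x \<le> C"
    using inj_split_map by (intro exI[of _ 0]) (simp add: dist_G_eq)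
  show "\<exists>C. \<forall>p\<in>H \<times> quot H. dist_HQ (split_map (inv split_map p)) p \<le> C"
    by (intro exI[of _ 0]) (auto simp: quot_def dist_G_eq)
qed (fact coarse_map_split_map coarse_map_inv_split_map)+

theorem coarsely_split: "coarsely_split H"
proof -
  have "dist_HQ (split_map k) (k, H) \<le> real (word_norm (- r 0))" if "k \<in> H" for k
  proof -
    have "split_map k = (r 0 + k, coset H 0)"
      using retraction_add[OF that, of 0] coset_eqI[OF subgroup, of k 0] that
      unfolding split_map_def by simp
    then show ?thesis using dist_Q_coset_self[of 0] by (simp add: dist_G_eq coset_0)
  qed
  moreover have "dist_Q (snd (split_map g)) (coset H g) \<le> 0" for g
    by (simp add: split_map_def)
  ultimately show ?thesis
    unfolding coarsely_split_def Let_def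
    using proper_norm_word_norm[OF countable_UNIV] proper_norm_coset_norm[OF countable_UNIV subgroup]
      coarse_equiv_split_map
    unfolding dist_HQ_def dist_G_def dist_Q_def by blast
qed

end

theorem mainTheorem5:
  fixes S :: "'a::ab_group_add set"
  assumes "countable (UNIV :: 'a set)"
    and "finite_Q_dim TYPE('a)"
    and "max_indep_inf_order S"
    and "even_by_quotient S"
  shows "coarsely_split (gen S)"
proof -
  have "\<exists>m::int. m > 0 \<and> zsm m g \<in> gen S" for g :: 'a
  proof -
    obtain k :: nat where "zsm (2 ^ k) g \<in> gen S"
      using assms(4) unfolding even_by_quotient_def by blast
    then show ?thesis by (intro exI[of _ "2 ^ k"]) simp
  qed
  then interpret rational_coordinates S
    using assms(3) unfolding max_indep_inf_order_def by unfold_locales auto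
  interpret equivariant_retraction "gen S" int_part
    using assms(1) is_subgroup_gen int_part_in_gen int_part_add_gen finite_range_int_part_diff
    by unfold_locales
  show ?thesis by (rule coarsely_split)
qed

end
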